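(* Let $(G,R,\omega)$ be a metric RPP instance and let $c$ be the number of connected components of $G\langle R\rangle$. For every edge-minimizing Eulerian extension $S$, at most $2c-2$ vertices that are balanced in $G\langle R\rangle$ are incident to edges of $S$. The bound is tight: for every $c\ge 1$ there is a metric RPP instance with $c$ components and an edge-minimizing Eulerian extension $S$ such that exactly $2c-2$ balanced vertices of $G\langle R\rangle$ are incident to edges of $S$.
   Context: An RPP instance is a triple $(G,R,\omega)$, where $G=(V,E)$ is an undirected multigraph, $\omega\colon E\to\mathbb{N}$ assigns weights (parallel edges have equal weight), and $R$ is a nonempty multiset of edges of $G$. The instance is metric if $G$ contains an edge between any two vertices and the weights satisfy the triangle inequality $\omega(\{u,w\})\le\omega(\{u,v\})+\omega(\{v,w\})$ for all $u,v,w\in V$. For a multiset $X$ of edges: - $\omega(X)$ and $|X|$ are the weight and cardinality counted with multiplicity; - $V(X)$ is the set of vertices incident to edges of $X$; - $G\langle X\rangle=(V(X),X)$ is the multigraph formed by $X$ (no isolated vertices); - $\uplus$ denotes multiset sum. A vertex is balanced in a multigraph if its degree is even (a loop counts 2), and imbalanced otherwise. A multigraph without isolated vertices is Eulerian if it is connected and all vertices are balanced. An Eulerian extension for $(G,R,\omega)$ is a multiset $S$ of edges of $G$ such that $G\langle R\uplus S\rangle$ is Eulerian. It is edge-minimizing if there is no Eulerian extension $S'$ with $|S'|<|S|$ and $\omega(S')\le\omega(S)$. *)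

theory Defs
  imports Main "HOL-Library.Multiset" "HOL-Library.Uprod"
begin

text \<open>Edges are unordered pairs of vertices (loops allowed, Upair v v).
  Since parallel edges have equal weight and R, S are multisets, an undirected
  multigraph G = (V,E) is represented by its vertex set V and the set E of
  vertex pairs joined by at least one edge; the weight is a function on pairs.\<close>

definition is_rpp :: "'v set \<Rightarrow> 'v uprod set \<Rightarrow> 'v uprod multiset \<Rightarrow> bool" where
  "is_rpp V E R \<longleftrightarrow> finite V \<and> (\<forall>e\<in>E. set_uprod e \<subseteq> V) \<and> R \<noteq> {#} \<and> set_mset R \<subseteq> E"

definition is_metric :: "'v set \<Rightarrow> 'v uprod set \<Rightarrow> ('v uprod \<Rightarrow> nat) \<Rightarrow> bool" where
  "is_metric V E \<omega> \<longleftrightarrow>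
     (\<forall>u\<in>V. \<forall>v\<in>V. u \<noteq> v \<longrightarrow> Upair u v \<in> E) \<and>
     (\<forall>u\<in>V. \<forall>v\<in>V. \<forall>w\<in>V. Upair u w \<in> E \<and> Upair u v \<in> E \<and> Upair v w \<in> E \<longrightarrow>
        \<omega> (Upair u w) \<le> \<omega> (Upair u v) + \<omega> (Upair v w))"

definition verts :: "'v uprod multiset \<Rightarrow> 'v set" where
  "verts X = (\<Union>e\<in>set_mset X. set_uprod e)"

definition wt :: "('v uprod \<Rightarrow> nat) \<Rightarrow> 'v uprod multiset \<Rightarrow> nat" where
  "wt \<omega> X = (\<Sum>e\<in>#X. \<omega> e)"

definition deg :: "'v uprod multiset \<Rightarrow> 'v \<Rightarrow> nat" where
  "deg X v = (\<Sum>e\<in>#X. if e = Upair v v then 2 else if v \<in> set_uprod e then 1 else 0)"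

definition balanced :: "'v uprod multiset \<Rightarrow> 'v \<Rightarrow> bool" where
  "balanced X v \<longleftrightarrow> even (deg X v)"

definition adj :: "'v uprod multiset \<Rightarrow> ('v \<times> 'v) set" where
  "adj X = {(u, w). Upair u w \<in># X}"

definition connected_ms :: "'v uprod multiset \<Rightarrow> bool" where
  "connected_ms X \<longleftrightarrow> (\<forall>u\<in>verts X. \<forall>w\<in>verts X. (u, w) \<in> (adj X)\<^sup>*)"

definition components :: "'v uprod multiset \<Rightarrow> 'v set set" where
  "components X = {{w. (u, w) \<in> (adj X)\<^sup>*} | u. u \<in> verts X}"

definition eulerian :: "'v uprod multiset \<Rightarrow> bool" where
  "eulerian X \<longleftrightarrow> connected_ms X \<and> (\<forall>v\<in>verts X. balanced X v)"

definition eulerian_ext :: "'v uprod set \<Rightarrow> 'v uprod multiset \<Rightarrow> 'v uprod multiset \<Rightarrow> bool" where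
  "eulerian_ext E R S \<longleftrightarrow> set_mset S \<subseteq> E \<and> eulerian (R + S)"

definition edge_min_ext ::
  "'v uprod set \<Rightarrow> ('v uprod \<Rightarrow> nat) \<Rightarrow> 'v uprod multiset \<Rightarrow> 'v uprod multiset \<Rightarrow> bool" where
  "edge_min_ext E \<omega> R S \<longleftrightarrow> eulerian_ext E R S \<and>
     \<not> (\<exists>S'. eulerian_ext E R S' \<and> size S' < size S \<and> wt \<omega> S' \<le> wt \<omega> S)"

definition bal_touched :: "'v uprod multiset \<Rightarrow> 'v uprod multiset \<Rightarrow> 'v set" where
  "bal_touched R S = {v \<in> verts R. balanced R v \<and> v \<in> verts S}"

end

theory Submission
  imports Defs
begin

text \<open>
  Replacing two edges vu, vw of an Eulerian extension S by the shortcut uw (nothing if u = w)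
  keeps all degrees even, lowers the number of edges and, by the triangle inequality, does not
  increase the weight. So for an edge-minimizing S every such split disconnects R + S. Together
  with the parity of cuts this shows that S has no loops and touches only vertices of R, and
  that for a vertex v balanced in R with an S-edge vu, nothing reachable from u in R + S - v
  lies in the R-component of v. Hence v is determined by its R-component C and by the component
  containing the R-component of u in the graph of R-components (adjacent when joined by an edge
  of R + S) with C deleted. For a connected graph on c vertices, these numbers of components,
  summed over all deleted vertices, are at most 2c - 2.
\<close>

section \<open>Degrees, components and cuts of edge multisets\<close>

definition edge_deg :: "'v uprod \<Rightarrow> 'v \<Rightarrow> nat" where
  "edge_deg e v = (if e = Upair v v then 2 else if v \<in> set_uprod e then 1 else 0)"

lemma edge_deg_Upair: "edge_deg (Upair a b) v = (if v = a then 1 else 0) + (if v = b then 1 else 0)"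
  by (auto simp: edge_deg_def)

lemma deg_empty [simp]: "deg {#} v = 0"
  by (simp add: deg_def)

lemma deg_add_mset [simp]: "deg (add_mset e X) v = edge_deg e v + deg X v"
  by (simp add: deg_def edge_deg_def)

lemma deg_union [simp]: "deg (X + Y) v = deg X v + deg Y v"
  by (simp add: deg_def)

lemma deg_diff: "X \<subseteq># Y \<Longrightarrow> deg (Y - X) v = deg Y v - deg X v"
  by (metis add_diff_cancel_right' deg_union subset_mset.diff_add)

lemma verts_empty [simp]: "verts {#} = {}"
  by (simp add: verts_def)

lemma verts_add_mset [simp]: "verts (add_mset e X) = set_uprod e \<union> verts X"
  by (simp add: verts_def)

lemma verts_union [simp]: "verts (X + Y) = verts X \<union> verts Y"
  by (simp add: verts_def)

lemma finite_verts [simp]: "finite (verts X)"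
  by (simp add: verts_def)

lemma verts_mono: "X \<subseteq># Y \<Longrightarrow> verts X \<subseteq> verts Y"
  by (auto simp: verts_def dest: mset_subset_eqD)

lemma in_verts_iff: "v \<in> verts X \<longleftrightarrow> (\<exists>w. Upair v w \<in># X)"
proof
  assume "v \<in> verts X"
  then obtain e where "e \<in># X" "v \<in> set_uprod e"
    by (auto simp: verts_def)
  moreover obtain a b where "e = Upair a b"
    by (cases e)
  ultimately show "\<exists>w. Upair v w \<in># X"
    by (metis Upair_inject insert_iff set_uprod_simps singletonD)
qed (force simp: verts_def)

lemma Upair_mem_verts: "Upair a b \<in># X \<Longrightarrow> a \<in> verts X \<and> b \<in> verts X"
  by (force simp: verts_def)

lemma deg_pos_iff: "0 < deg X v \<longleftrightarrow> v \<in> verts X"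
  by (induction X) (auto simp: edge_deg_def)

lemma eulerian_even_deg: "eulerian X \<Longrightarrow> even (deg X v)"
  by (cases "v \<in> verts X") (auto simp: eulerian_def balanced_def deg_pos_iff[symmetric])

lemma mem_adj_iff [simp]: "(a, b) \<in> adj X \<longleftrightarrow> Upair a b \<in># X"
  by (simp add: adj_def)

lemma Upair_commute: "Upair a b = Upair b a"
  by simp

lemma sym_adj: "sym (adj X)"
  by (rule symI) (simp add: Upair_commute)

lemma rtrancl_adj_sym: "(a, b) \<in> (adj X)\<^sup>* \<Longrightarrow> (b, a) \<in> (adj X)\<^sup>*"
  by (meson sym_adj sym_rtrancl symD)

lemma rtrancl_adj_verts: "(a, b) \<in> (adj X)\<^sup>* \<Longrightarrow> a \<in> verts X \<Longrightarrow> b \<in> verts X"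
  by (induction rule: rtrancl_induct) (auto dest: Upair_mem_verts)

lemma connected_msI:
  assumes "\<And>y. y \<in> verts X \<Longrightarrow> (y, r) \<in> (adj X)\<^sup>*"
  shows "connected_ms X"
  unfolding connected_ms_def by (meson assms rtrancl_adj_sym rtrancl_trans)

lemma connected_ms_remove_loop:
  assumes "connected_ms (add_mset (Upair x x) X)"
  shows "connected_ms X"
proof -
  have "adj (add_mset (Upair x x) X) - Id \<subseteq> adj X"
    by auto
  then have "(adj (add_mset (Upair x x) X))\<^sup>* \<subseteq> (adj X)\<^sup>*"
    by (metis rtrancl_mono rtrancl_r_diff_Id)
  with assms show ?thesis
    unfolding connected_ms_def by auto
qed

definition comp_of :: "'v uprod multiset \<Rightarrow> 'v \<Rightarrow> 'v set" where
  "comp_of X a = {w. (a, w) \<in> (adj X)\<^sup>*}"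

lemma components_eq: "components X = comp_of X ` verts X"
  unfolding components_def comp_of_def by blast

lemma comp_of_self: "a \<in> comp_of X a"
  by (simp add: comp_of_def)

lemma comp_of_eq: "b \<in> comp_of X a \<Longrightarrow> comp_of X b = comp_of X a"
  unfolding comp_of_def by (auto intro: rtrancl_trans dest: rtrancl_adj_sym)

lemma comp_of_disjoint: "comp_of X a \<noteq> comp_of X b \<Longrightarrow> comp_of X a \<inter> comp_of X b = {}"
  by (metis comp_of_eq disjoint_iff)

lemma rtrancl_adj_comp_of: "p \<in> comp_of X a \<Longrightarrow> q \<in> comp_of X a \<Longrightarrow> (p, q) \<in> (adj X)\<^sup>*"
  unfolding comp_of_def by (blast intro: rtrancl_trans rtrancl_adj_sym)

lemma comp_of_in_components: "a \<in> verts X \<Longrightarrow> comp_of X a \<in> components X"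
  by (simp add: components_eq)

lemma components_disjoint:
  assumes "C \<in> components X" "D \<in> components X" "C \<noteq> D"
  shows "C \<inter> D = {}"
proof -
  obtain a b where "C = comp_of X a" "D = comp_of X b"
    using assms(1,2) by (auto simp: components_eq)
  with assms(3) show ?thesis
    by (simp add: comp_of_disjoint)
qed

definition adj_avoiding :: "'v uprod multiset \<Rightarrow> 'v \<Rightarrow> ('v \<times> 'v) set" where
  "adj_avoiding X v = {(a, b). Upair a b \<in># X \<and> a \<noteq> v \<and> b \<noteq> v}"

definition reach_avoiding :: "'v uprod multiset \<Rightarrow> 'v \<Rightarrow> 'v \<Rightarrow> 'v set" where
  "reach_avoiding X v u = {y. (u, y) \<in> (adj_avoiding X v)\<^sup>*}"

lemma adj_avoiding_mono: "X \<subseteq># Y \<Longrightarrow> adj_avoiding X v \<subseteq> adj_avoiding Y v"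
  by (auto simp: adj_avoiding_def dest: mset_subset_eqD)

lemma rtrancl_adj_avoiding_mono:
  "X \<subseteq># Y \<Longrightarrow> (a, b) \<in> (adj_avoiding X v)\<^sup>* \<Longrightarrow> (a, b) \<in> (adj_avoiding Y v)\<^sup>*"
  using rtrancl_mono[OF adj_avoiding_mono[of X Y v]] by blast

lemma start_in_reach_avoiding: "u \<in> reach_avoiding X v u"
  by (simp add: reach_avoiding_def)

lemma avoided_notin_reach_avoiding: "u \<noteq> v \<Longrightarrow> v \<notin> reach_avoiding X v u"
proof -
  have "(u, y) \<in> (adj_avoiding X v)\<^sup>* \<Longrightarrow> u \<noteq> v \<Longrightarrow> y \<noteq> v" for y
    by (induction rule: rtrancl_induct) (simp_all add: adj_avoiding_def)
  then show "u \<noteq> v \<Longrightarrow> v \<notin> reach_avoiding X v u"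
    by (auto simp: reach_avoiding_def)
qed

lemma reach_avoiding_closed:
  assumes "Upair a b \<in># X" "a \<in> reach_avoiding X v u" "u \<noteq> v" "b \<noteq> v"
  shows "b \<in> reach_avoiding X v u"
proof -
  have "v \<notin> reach_avoiding X v u"
    using assms(3) by (rule avoided_notin_reach_avoiding)
  with assms(2) have "a \<noteq> v"
    by blast
  with assms(1,4) have "(a, b) \<in> adj_avoiding X v"
    by (simp add: adj_avoiding_def)
  with assms(2) show ?thesis
    unfolding reach_avoiding_def by simp
qed

lemma finite_reach_avoiding: "finite (reach_avoiding X v u)"
proof (rule finite_subset)
  show "reach_avoiding X v u \<subseteq> insert u (verts X)"
  proof
    fix y assume "y \<in> reach_avoiding X v u"
    then have "(u, y) \<in> (adj_avoiding X v)\<^sup>*"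
      by (simp add: reach_avoiding_def)
    then show "y \<in> insert u (verts X)"
    proof (induction rule: rtrancl_induct)
      case (step y z)
      from step(2) show ?case
        by (auto simp: adj_avoiding_def dest: Upair_mem_verts)
    qed simp
  qed
qed simp

lemma rtrancl_adj_last_neighbour:
  assumes "(y, v) \<in> (adj X)\<^sup>*" "y \<noteq> v"
  shows "\<exists>z. (y, z) \<in> (adj_avoiding X v)\<^sup>* \<and> Upair z v \<in># X"
  using assms
proof (induction rule: converse_rtrancl_induct)
  case (step y y')
  show ?case
  proof (cases "y' = v")
    case False
    then obtain z where "(y', z) \<in> (adj_avoiding X v)\<^sup>*" "Upair z v \<in># X"
      using step by blast
    moreover have "(y, y') \<in> adj_avoiding X v"
      using step False by (auto simp: adj_avoiding_def)
    ultimately show ?thesis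
      by (meson converse_rtrancl_into_rtrancl)
  qed (use step in \<open>auto intro: exI[of _ y]\<close>)
qed simp

lemma rtrancl_adj_avoiding_if_notin_comp:
  assumes "(p, q) \<in> (adj X)\<^sup>*" "v \<notin> comp_of X p"
  shows "(p, q) \<in> (adj_avoiding X v)\<^sup>*"
  using assms(1)
proof (induction rule: rtrancl_induct)
  case (step y z)
  have "y \<in> comp_of X p" "z \<in> comp_of X p"
    using step(1,2) unfolding comp_of_def by (blast intro: rtrancl_into_rtrancl)+
  with step(2) assms(2) have "(y, z) \<in> adj_avoiding X v"
    by (auto simp: adj_avoiding_def)
  then show ?case
    using step(3) by simp
qed simp

lemma rtrancl_adj_avoiding_in_other_comp:
  assumes D: "D \<in> components X" and C: "C \<in> components X" "D \<noteq> C" "v \<in> C"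
    and pq: "p \<in> D" "q \<in> D"
  shows "(p, q) \<in> (adj_avoiding X v)\<^sup>*"
proof -
  obtain a where a: "D = comp_of X a"
    using D by (auto simp: components_eq)
  have "v \<notin> D"
    using components_disjoint[OF D C(1,2)] C(3) by blast
  moreover have "comp_of X p = D"
    using pq(1) by (simp add: a comp_of_eq)
  moreover have "(p, q) \<in> (adj X)\<^sup>*"
    using pq by (simp add: a rtrancl_adj_comp_of)
  ultimately show ?thesis
    using rtrancl_adj_avoiding_if_notin_comp by metis
qed

definition crossing :: "'v set \<Rightarrow> 'v uprod \<Rightarrow> bool" where
  "crossing K e \<longleftrightarrow> (\<exists>a\<in>set_uprod e. a \<in> K) \<and> (\<exists>b\<in>set_uprod e. b \<notin> K)"

lemma even_sum_edge_deg_iff: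
  assumes "finite K"
  shows "even (\<Sum>y\<in>K. edge_deg e y) \<longleftrightarrow> \<not> crossing K e"
proof -
  obtain a b where e: "e = Upair a b"
    by (cases e)
  have "(\<Sum>y\<in>K. edge_deg e y) = (if a \<in> K then 1 else 0) + (if b \<in> K then 1 else 0)"
    using assms by (simp add: e edge_deg_Upair sum.distrib)
  then show ?thesis
    by (auto simp: e crossing_def)
qed

lemma even_sum_deg_iff:
  assumes "finite K"
  shows "even (\<Sum>y\<in>K. deg X y) \<longleftrightarrow> even (size (filter_mset (crossing K) X))"
  by (induction X) (simp_all add: sum.distrib even_sum_edge_deg_iff[OF assms])

lemma even_size_crossing:
  assumes "finite K" "\<And>y. y \<in> K \<Longrightarrow> even (deg X y)"
  shows "even (size (filter_mset (crossing K) X))"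
  using assms by (simp add: dvd_sum flip: even_sum_deg_iff)

lemma rtrancl_adj_crossing:
  assumes "(a, b) \<in> (adj X)\<^sup>*" "a \<in> K" "b \<notin> K"
  shows "\<exists>e\<in>#X. crossing K e"
  using assms(1,3)
proof (induction rule: rtrancl_induct)
  case (step y z)
  show ?case
  proof (cases "y \<in> K")
    case True
    with step(2,4) have "crossing K (Upair y z)"
      by (auto simp: crossing_def)
    with step(2) show ?thesis
      by auto
  qed (use step in blast)
qed (use assms(2) in simp)

lemma sum_size_filter_mset:
  assumes "finite J"
  shows "(\<Sum>j\<in>J. size (filter_mset (P j) X)) = (\<Sum>e\<in>#X. card {j\<in>J. P j e})"
proof (induction X)
  case (add e X)
  have "(\<Sum>j\<in>J. size (filter_mset (P j) (add_mset e X)))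
      = (\<Sum>j\<in>J. (if P j e then 1 else 0) + size (filter_mset (P j) X))"
    by (intro sum.cong) auto
  also have "\<dots> = card {j\<in>J. P j e} + (\<Sum>j\<in>J. size (filter_mset (P j) X))"
    using assms by (simp add: sum.distrib sum.inter_filter[symmetric])
  finally show ?case
    using add.IH by simp
qed simp

lemma crossing_reach_avoiding:
  assumes ab: "Upair a b \<in># X" and cross: "crossing (reach_avoiding X x u) (Upair a b)"
    and "u \<noteq> x"
  shows "(a = x \<and> b \<in> reach_avoiding X x u) \<or> (b = x \<and> a \<in> reach_avoiding X x u)"
proof -
  have ba: "Upair b a \<in># X"
    using ab by (simp add: Upair_commute)
  have "(a \<in> reach_avoiding X x u \<and> b \<notin> reach_avoiding X x u) \<or>
      (b \<in> reach_avoiding X x u \<and> a \<notin> reach_avoiding X x u)"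
    using cross by (auto simp: crossing_def)
  then show ?thesis
    using reach_avoiding_closed[OF ab _ \<open>u \<noteq> x\<close>] reach_avoiding_closed[OF ba _ \<open>u \<noteq> x\<close>]
    by blast
qed

lemma even_deg_second_edge_into_reach:
  assumes even: "\<And>y. even (deg X y)" and xu: "Upair x u \<in># X" "u \<noteq> x"
  shows "\<exists>z. Upair x z \<in># X - {#Upair x u#} \<and> z \<in> reach_avoiding X x u"
proof -
  define K where "K = reach_avoiding X x u"
  define F where "F = filter_mset (crossing K) X"
  have uK: "u \<in> K" and xK: "x \<notin> K"
    using xu(2) by (simp_all add: K_def start_in_reach_avoiding avoided_notin_reach_avoiding)
  have "even (size F)"
    unfolding F_def K_def using finite_reach_avoiding even by (rule even_size_crossing)
  moreover have "Upair x u \<in># F"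
    using xu(1) uK xK by (auto simp: F_def crossing_def)
  ultimately have "size (F - {#Upair x u#}) \<noteq> 0"
    by (metis odd_one size_eq_0_iff_empty size_single insert_DiffM)
  then obtain f where f: "f \<in># F - {#Upair x u#}"
    by (metis multiset_nonemptyE size_empty)
  obtain a b where ab: "f = Upair a b"
    by (cases f)
  have "F - {#Upair x u#} \<subseteq># X - {#Upair x u#}"
    by (auto simp: F_def subseteq_mset_def intro: diff_le_mono)
  then have fX: "Upair a b \<in># X - {#Upair x u#}"
    using f unfolding ab by (rule mset_subset_eqD)
  moreover have "crossing K (Upair a b)"
    using f by (auto simp: ab F_def dest: in_diffD)
  then have "(a = x \<and> b \<in> K) \<or> (b = x \<and> a \<in> K)"
    using crossing_reach_avoiding[OF in_diffD[OF fX] _ xu(2)] by (simp add: K_def)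
  ultimately show ?thesis
    by (auto simp: K_def Upair_commute)
qed

section \<open>Splitting off a pair of edges\<close>

definition shortcut :: "'v \<Rightarrow> 'v \<Rightarrow> 'v uprod multiset" where
  "shortcut u w = (if u = w then {#} else {#Upair u w#})"

definition split_off :: "'v \<Rightarrow> 'v \<Rightarrow> 'v \<Rightarrow> 'v uprod multiset \<Rightarrow> 'v uprod multiset" where
  "split_off v u w X = X - {#Upair v u, Upair v w#} + shortcut u w"

lemma split_off_union:
  assumes "{#Upair v u, Upair v w#} \<subseteq># S"
  shows "R + split_off v u w S = split_off v u w (R + S)"
  unfolding split_off_def multiset_diff_union_assoc[OF assms] by (rule add.assoc[symmetric])

lemma split_off_plus_wedge:
  assumes "{#Upair v u, Upair v w#} \<subseteq># X"
  shows "split_off v u w X + {#Upair v u, Upair v w#} = X + shortcut u w"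
proof -
  have "X - {#Upair v u, Upair v w#} + {#Upair v u, Upair v w#} = X"
    using assms by (rule subset_mset.diff_add)
  then show ?thesis
    unfolding split_off_def by (metis add.assoc add.commute)
qed

lemma size_split_off_less:
  assumes "{#Upair v u, Upair v w#} \<subseteq># X"
  shows "size (split_off v u w X) < size X"
proof -
  have "size (split_off v u w X) + 2 = size X + size (shortcut u w)"
    using arg_cong[OF split_off_plus_wedge[OF assms], of size] by simp
  moreover have "size (shortcut u w) \<le> 1"
    by (simp add: shortcut_def)
  ultimately show ?thesis
    by linarith
qed

lemma wt_split_off_le:
  assumes "{#Upair v u, Upair v w#} \<subseteq># X"
    and "u \<noteq> w \<Longrightarrow> \<omega> (Upair u w) \<le> \<omega> (Upair v u) + \<omega> (Upair v w)"
  shows "wt \<omega> (split_off v u w X) \<le> wt \<omega> X"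
proof -
  have "wt \<omega> (split_off v u w X) + \<omega> (Upair v u) + \<omega> (Upair v w) = wt \<omega> X + wt \<omega> (shortcut u w)"
    using arg_cong[OF split_off_plus_wedge[OF assms(1)], of "wt \<omega>"] by (simp add: wt_def)
  moreover have "wt \<omega> (shortcut u w) \<le> \<omega> (Upair v u) + \<omega> (Upair v w)"
    using assms(2) by (simp add: shortcut_def wt_def)
  ultimately show ?thesis
    by linarith
qed

lemma even_deg_split_off_iff:
  assumes "{#Upair v u, Upair v w#} \<subseteq># X" "u \<noteq> v" "w \<noteq> v"
  shows "even (deg (split_off v u w X) y) \<longleftrightarrow> even (deg X y)"
proof -
  have "deg (split_off v u w X) y + deg {#Upair v u, Upair v w#} y = deg X y + deg (shortcut u w) y"
    using arg_cong[OF split_off_plus_wedge[OF assms(1)], of "\<lambda>X. deg X y"] by simp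
  moreover have "even (deg {#Upair v u, Upair v w#} y + deg (shortcut u w) y)"
    using assms(2,3) by (simp add: shortcut_def edge_deg_Upair)
  ultimately show ?thesis
    by presburger
qed

lemma verts_split_off_subset:
  assumes "{#Upair v u, Upair v w#} \<subseteq># X"
  shows "verts (split_off v u w X) \<subseteq> verts X"
proof -
  have "verts (X - {#Upair v u, Upair v w#}) \<subseteq> verts X"
    by (rule verts_mono) simp
  moreover have "u \<in> verts X" "w \<in> verts X"
    using verts_mono[OF assms] by auto
  ultimately show ?thesis
    by (auto simp: split_off_def shortcut_def)
qed

lemma Upair_mem_split_off_iff:
  assumes "u \<noteq> v" "w \<noteq> v"
  shows "Upair v z \<in># split_off v u w X \<longleftrightarrow> Upair v z \<in># X - {#Upair v u, Upair v w#}"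
  using assms by (auto simp: split_off_def shortcut_def)

lemma adj_avoiding_subset_split_off: "adj_avoiding X v \<subseteq> adj (split_off v u w X)"
  by (auto simp: adj_avoiding_def split_off_def in_diff_count)

lemma mem_diff_single_if_neq: "a \<in># M \<Longrightarrow> a \<noteq> b \<Longrightarrow> a \<in># M - {#b#}"
  by (simp add: in_diff_count)

lemma Upair_mem_diff_wedge:
  assumes "Upair v z \<in># X" "z \<noteq> u" "z \<noteq> w"
  shows "Upair v z \<in># X - {#Upair v u, Upair v w#}"
  using assms by (auto simp: in_diff_count)

lemma split_off_reaches_neighbour:
  assumes conn: "connected_ms X" and wedge: "{#Upair v u, Upair v w#} \<subseteq># X"
    and y: "y \<in> verts (split_off v u w X)" "y \<noteq> v"
  shows "\<exists>z. (y, z) \<in> (adj (split_off v u w X))\<^sup>* \<and> Upair z v \<in># X"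
proof -
  have "v \<in> verts X" "y \<in> verts X"
    using verts_mono[OF wedge] y(1) verts_split_off_subset[OF wedge] by auto
  then have "(y, v) \<in> (adj X)\<^sup>*"
    using conn by (simp add: connected_ms_def)
  then obtain z where "(y, z) \<in> (adj_avoiding X v)\<^sup>*" "Upair z v \<in># X"
    using rtrancl_adj_last_neighbour[OF _ y(2)] by blast
  moreover have "(adj_avoiding X v)\<^sup>* \<subseteq> (adj (split_off v u w X))\<^sup>*"
    using adj_avoiding_subset_split_off by (rule rtrancl_mono)
  ultimately show ?thesis
    by blast
qed

lemma connected_split_off:
  assumes conn: "connected_ms X" and wedge: "{#Upair v u, Upair v w#} \<subseteq># X"
    and uw: "u \<noteq> v" "w \<noteq> v"
    and z: "Upair v z \<in># X - {#Upair v u, Upair v w#}" "z \<in> reach_avoiding X v u"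
  shows "connected_ms (split_off v u w X)"
proof (rule connected_msI[where r = v])
  let ?X' = "split_off v u w X"
  have "(u, z) \<in> (adj_avoiding X v)\<^sup>*"
    using z(2) by (simp add: reach_avoiding_def)
  then have "(u, z) \<in> (adj ?X')\<^sup>*"
    using rtrancl_mono[OF adj_avoiding_subset_split_off[of X v u w]] by blast
  moreover have "Upair v z \<in># ?X'"
    using z(1) Upair_mem_split_off_iff[OF uw] by blast
  then have "(z, v) \<in> adj ?X'"
    by (simp add: Upair_commute)
  ultimately have u_v: "(u, v) \<in> (adj ?X')\<^sup>*"
    by (rule rtrancl_into_rtrancl)
  have w_v: "(w, v) \<in> (adj ?X')\<^sup>*"
  proof (cases "u = w")
    case False
    then have "(w, u) \<in> adj ?X'"
      by (simp add: split_off_def shortcut_def Upair_commute)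
    then show ?thesis
      using u_v by (rule converse_rtrancl_into_rtrancl)
  qed (use u_v in simp)
  fix y assume y: "y \<in> verts ?X'"
  show "(y, v) \<in> (adj ?X')\<^sup>*"
  proof (cases "y = v")
    case False
    then obtain z0 where z0: "(y, z0) \<in> (adj ?X')\<^sup>*" "Upair z0 v \<in># X"
      using split_off_reaches_neighbour[OF conn wedge y] by blast
    have "(z0, v) \<in> (adj ?X')\<^sup>*"
    proof (cases "z0 = u \<or> z0 = w")
      case False
      then have "Upair v z0 \<in># X - {#Upair v u, Upair v w#}"
        using z0(2) by (intro Upair_mem_diff_wedge) (auto simp: Upair_commute)
      then have "Upair v z0 \<in># ?X'"
        using Upair_mem_split_off_iff[OF uw] by blast
      then show ?thesis
        by (simp add: Upair_commute r_into_rtrancl)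
    qed (use u_v w_v in blast)
    with z0(1) show ?thesis
      by (rule rtrancl_trans)
  qed simp
qed

lemma connected_split_off_isolating:
  assumes conn: "connected_ms X" and wedge: "{#Upair v u, Upair v w#} \<subseteq># X"
    and uw: "u \<noteq> v" "w \<noteq> v"
    and isolated: "\<And>z. Upair v z \<notin># X - {#Upair v u, Upair v w#}"
  shows "connected_ms (split_off v u w X)"
proof (rule connected_msI[where r = u])
  let ?X' = "split_off v u w X"
  have w_u: "(w, u) \<in> (adj ?X')\<^sup>*"
  proof (cases "u = w")
    case False
    then have "(w, u) \<in> adj ?X'"
      by (simp add: split_off_def shortcut_def Upair_commute)
    then show ?thesis
      by blast
  qed simp
  fix y assume y: "y \<in> verts ?X'"
  moreover have "y \<noteq> v"
    using y isolated Upair_mem_split_off_iff[OF uw] by (auto simp: in_verts_iff)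
  ultimately obtain z0 where z0: "(y, z0) \<in> (adj ?X')\<^sup>*" "Upair z0 v \<in># X"
    using split_off_reaches_neighbour[OF conn wedge] by blast
  have "z0 = u \<or> z0 = w"
  proof (rule ccontr)
    assume "\<not> (z0 = u \<or> z0 = w)"
    then have "Upair v z0 \<in># X - {#Upair v u, Upair v w#}"
      using z0(2) by (intro Upair_mem_diff_wedge) (simp_all add: Upair_commute)
    with isolated show False
      by blast
  qed
  with z0(1) w_u show "(y, u) \<in> (adj ?X')\<^sup>*"
    by (auto intro: rtrancl_trans)
qed

section \<open>Structure of edge-minimizing Eulerian extensions\<close>

locale edge_min_eulerian_ext =
  fixes V :: "'v set" and E :: "'v uprod set" and \<omega> :: "'v uprod \<Rightarrow> nat"
    and R S :: "'v uprod multiset"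
  assumes rpp: "is_rpp V E R" and metric: "is_metric V E \<omega>" and edge_min: "edge_min_ext E \<omega> R S"
begin

lemma S_subset_E: "set_mset S \<subseteq> E"
  using edge_min by (simp add: edge_min_ext_def eulerian_ext_def)

lemma eulerian_R_S: "eulerian (R + S)"
  using edge_min by (simp add: edge_min_ext_def eulerian_ext_def)

lemma even_deg_R_S: "even (deg (R + S) y)"
  using eulerian_R_S by (rule eulerian_even_deg)

lemma no_smaller_ext:
  assumes "eulerian_ext E R S'" "size S' < size S"
  shows "wt \<omega> S < wt \<omega> S'"
  using edge_min assms by (auto simp: edge_min_ext_def)

lemma triangle:
  assumes "Upair v u \<in> E" "Upair v w \<in> E" "u \<noteq> w"
  shows "Upair u w \<in> E" "\<omega> (Upair u w) \<le> \<omega> (Upair v u) + \<omega> (Upair v w)"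
proof -
  have V: "u \<in> V" "v \<in> V" "w \<in> V"
    using assms(1,2) rpp by (auto simp: is_rpp_def)
  then show uw: "Upair u w \<in> E"
    using metric assms(3) by (simp add: is_metric_def)
  have "Upair u v \<in> E"
    using assms(1) by (simp add: Upair_commute)
  then have "\<omega> (Upair u w) \<le> \<omega> (Upair u v) + \<omega> (Upair v w)"
    using metric V uw assms(2) unfolding is_metric_def by blast
  then show "\<omega> (Upair u w) \<le> \<omega> (Upair v u) + \<omega> (Upair v w)"
    by (simp add: Upair_commute)
qed

lemma loop_notin_S: "Upair x x \<notin># S"
proof
  assume "Upair x x \<in># S"
  then obtain S' where S: "S = add_mset (Upair x x) S'"
    by (metis insert_DiffM)
  have "connected_ms (R + S')"
    using eulerian_R_S connected_ms_remove_loop[of x "R + S'"] by (simp add: S eulerian_def)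
  moreover have "even (deg (R + S') y)" for y
    using even_deg_R_S[of y] by (simp add: S edge_deg_Upair)
  moreover have "set_mset S' \<subseteq> E"
    using S_subset_E by (simp add: S)
  ultimately have "eulerian_ext E R S'"
    by (simp add: eulerian_ext_def eulerian_def balanced_def)
  then have "wt \<omega> S < wt \<omega> S'"
    by (rule no_smaller_ext) (simp add: S)
  then show False
    by (simp add: S wt_def)
qed

lemma split_off_S_disconnects:
  assumes wedge: "{#Upair v u, Upair v w#} \<subseteq># S" and uw: "u \<noteq> v" "w \<noteq> v"
  shows "\<not> connected_ms (split_off v u w (R + S))"
proof
  assume conn: "connected_ms (split_off v u w (R + S))"
  define S' where "S' = split_off v u w S"
  have RS': "R + S' = split_off v u w (R + S)"
    unfolding S'_def by (rule split_off_union[OF wedge])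
  have wedge_RS: "{#Upair v u, Upair v w#} \<subseteq># R + S"
    using wedge by (simp add: subset_mset.add_increasing)
  have E: "Upair v u \<in> E" "Upair v w \<in> E"
    using wedge S_subset_E by (auto dest: mset_subset_eqD)
  have "set_mset S' \<subseteq> E"
    using S_subset_E triangle(1)[OF E] by (auto simp: S'_def split_off_def shortcut_def dest: in_diffD)
  moreover have "even (deg (R + S') y)" for y
    using even_deg_R_S even_deg_split_off_iff[OF wedge_RS uw] by (simp add: RS')
  ultimately have "eulerian_ext E R S'"
    using conn by (simp add: eulerian_ext_def eulerian_def balanced_def RS')
  then have "wt \<omega> S < wt \<omega> S'"
    by (rule no_smaller_ext) (simp add: S'_def size_split_off_less[OF wedge])
  moreover have "wt \<omega> S' \<le> wt \<omega> S"
    unfolding S'_def using wedge triangle(2)[OF E] by (rule wt_split_off_le)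
  ultimately show False
    by simp
qed

lemma split_off_S_keeps_edge:
  assumes "{#Upair v u, Upair v w#} \<subseteq># S" "u \<noteq> v" "w \<noteq> v"
  shows "\<exists>z. Upair v z \<in># R + S - {#Upair v u, Upair v w#}"
proof (rule ccontr)
  assume "\<nexists>z. Upair v z \<in># R + S - {#Upair v u, Upair v w#}"
  then have "connected_ms (split_off v u w (R + S))"
    using eulerian_R_S assms
    by (intro connected_split_off_isolating) (auto simp: eulerian_def subset_mset.add_increasing)
  with split_off_S_disconnects[OF assms] show False
    by contradiction
qed

lemma split_off_S_remaining_neighbour_unreachable:
  assumes "{#Upair v u, Upair v w#} \<subseteq># S" "u \<noteq> v" "w \<noteq> v"
    and "Upair v z \<in># R + S - {#Upair v u, Upair v w#}"
  shows "z \<notin> reach_avoiding (R + S) v u"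
  using split_off_S_disconnects[OF assms(1-3)] connected_split_off[OF _ _ assms(2-4)]
    eulerian_R_S assms(1) by (auto simp: eulerian_def subset_mset.add_increasing)

lemma S_second_edge:
  assumes "even (deg S v)" "Upair v u \<in># S"
  shows "\<exists>w. w \<noteq> v \<and> {#Upair v u, Upair v w#} \<subseteq># S"
proof -
  have uv: "u \<noteq> v"
    using assms(2) loop_notin_S by blast
  have "deg S v \<noteq> 1" "deg {#Upair v u#} v = 1"
    using assms(1) uv by (auto simp: edge_deg_Upair)
  moreover have "deg {#Upair v u#} v \<le> deg S v"
    using assms(2) by (metis deg_union le_add2 insert_DiffM add_mset_add_single)
  ultimately have "0 < deg (S - {#Upair v u#}) v"
    using assms(2) by (simp add: deg_diff)
  then obtain w where w: "Upair v w \<in># S - {#Upair v u#}"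
    by (auto simp: deg_pos_iff in_verts_iff)
  moreover have "w \<noteq> v"
    using w loop_notin_S by (blast dest: in_diffD)
  ultimately show ?thesis
    using assms(2) by (auto simp: insert_subset_eq_iff)
qed

lemma reach_avoiding_disjoint_comp_of:
  assumes "even (deg R v)" "Upair v u \<in># S"
  shows "reach_avoiding (R + S) v u \<inter> comp_of R v = {}"
proof (rule ccontr)
  assume "reach_avoiding (R + S) v u \<inter> comp_of R v \<noteq> {}"
  then obtain z where z: "z \<in> reach_avoiding (R + S) v u" "(v, z) \<in> (adj R)\<^sup>*"
    unfolding comp_of_def by blast
  have uv: "u \<noteq> v"
    using assms(2) loop_notin_S by blast
  then have "v \<notin> reach_avoiding (R + S) v u"
    by (rule avoided_notin_reach_avoiding)
  with z(1) have "z \<noteq> v"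
    by blast
  from rtrancl_adj_last_neighbour[OF rtrancl_adj_sym[OF z(2)] this] obtain y
    where y: "(z, y) \<in> (adj_avoiding R v)\<^sup>*" "Upair y v \<in># R"
    by blast
  have "(z, y) \<in> (adj_avoiding (R + S) v)\<^sup>*"
    using y(1) by (rule rtrancl_adj_avoiding_mono[OF mset_subset_eq_add_left])
  with z(1) have y_reach: "y \<in> reach_avoiding (R + S) v u"
    unfolding reach_avoiding_def mem_Collect_eq by (rule rtrancl_trans)
  have "even (deg S v)"
    using even_deg_R_S[of v] assms(1) by simp
  then obtain w where w: "w \<noteq> v" "{#Upair v u, Upair v w#} \<subseteq># S"
    using S_second_edge[OF _ assms(2)] by blast
  have "Upair v y \<in># R + (S - {#Upair v u, Upair v w#})"
    using y(2) by (simp add: Upair_commute)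
  then have "Upair v y \<in># R + S - {#Upair v u, Upair v w#}"
    by (simp add: multiset_diff_union_assoc[OF w(2)])
  with split_off_S_remaining_neighbour_unreachable[OF w(2) uv w(1)] y_reach show False
    by blast
qed

lemma S_edges_into_reach_avoiding:
  assumes xu: "Upair x u \<in># S" and xw: "Upair x w \<in># S"
  shows "w \<in> reach_avoiding (R + S) x u"
proof (rule ccontr)
  let ?K = "reach_avoiding (R + S) x u"
  assume wK: "w \<notin> ?K"
  have ux: "u \<noteq> x" and wx: "w \<noteq> x"
    using xu xw loop_notin_S[of x] by blast+
  have "Upair x u \<in># R + S"
    using xu by simp
  then obtain z where z: "Upair x z \<in># R + S - {#Upair x u#}" "z \<in> ?K"
    using even_deg_second_edge_into_reach[OF even_deg_R_S _ ux] by blast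
  have "w \<noteq> u"
    using wK start_in_reach_avoiding[of u "R + S" x] by blast
  with ux have "Upair x w \<noteq> Upair x u"
    by simp
  with xw have "Upair x w \<in># S - {#Upair x u#}"
    by (rule mem_diff_single_if_neq)
  with xu have wedge: "{#Upair x u, Upair x w#} \<subseteq># S"
    by (simp add: insert_subset_eq_iff)
  have "z \<noteq> w"
    using z(2) wK by blast
  with wx have "Upair x z \<noteq> Upair x w"
    by simp
  with z(1) have "Upair x z \<in># R + S - {#Upair x u#} - {#Upair x w#}"
    by (rule mem_diff_single_if_neq)
  then have "Upair x z \<in># R + S - {#Upair x u, Upair x w#}"
    by (simp add: add_mset_commute)
  with split_off_S_remaining_neighbour_unreachable[OF wedge ux wx] z(2) show False
    by blast
qed

lemma verts_S_subset_verts_R: "verts S \<subseteq> verts R"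
proof
  fix x assume "x \<in> verts S"
  then obtain u where xu: "Upair x u \<in># S"
    by (auto simp: in_verts_iff)
  show "x \<in> verts R"
  proof (rule ccontr)
    assume "x \<notin> verts R"
    then have noR: "Upair x y \<notin># R" for y
      by (auto simp: in_verts_iff)
    have "deg R x = 0"
      using \<open>x \<notin> verts R\<close> deg_pos_iff[of R x] by simp
    then have "even (deg S x)"
      using even_deg_R_S[of x] by simp
    then obtain w where w: "w \<noteq> x" "{#Upair x u, Upair x w#} \<subseteq># S"
      using S_second_edge[OF _ xu] by blast
    have ux: "u \<noteq> x"
      using xu loop_notin_S[of x] by blast
    obtain y where y: "Upair x y \<in># R + S - {#Upair x u, Upair x w#}"
      using split_off_S_keeps_edge[OF w(2) ux w(1)] by blast
    then have "Upair x y \<in># S"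
      using noR[of y] in_diffD[OF y] by simp
    then have "y \<in> reach_avoiding (R + S) x u"
      using S_edges_into_reach_avoiding[OF xu] by blast
    with split_off_S_remaining_neighbour_unreachable[OF w(2) ux w(1) y] show False
      by blast
  qed
qed

end

section \<open>Deleting a vertex from a connected graph\<close>

definition comp_within :: "'a set \<Rightarrow> ('a \<times> 'a) set \<Rightarrow> 'a \<Rightarrow> 'a set" where
  "comp_within M A x = {y \<in> M. (x, y) \<in> (A \<inter> M \<times> M)\<^sup>*}"

definition comps_within :: "'a set \<Rightarrow> ('a \<times> 'a) set \<Rightarrow> 'a set set" where
  "comps_within M A = comp_within M A ` M"

definition connected_within :: "'a set \<Rightarrow> ('a \<times> 'a) set \<Rightarrow> bool" where
  "connected_within M A \<longleftrightarrow> (\<forall>x\<in>M. \<forall>y\<in>M. (x, y) \<in> (A \<inter> M \<times> M)\<^sup>*)"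

lemma rtrancl_restrict_sym:
  assumes "sym A" "(x, y) \<in> (A \<inter> M \<times> M)\<^sup>*"
  shows "(y, x) \<in> (A \<inter> M \<times> M)\<^sup>*"
proof -
  have "sym (A \<inter> M \<times> M)"
    using assms(1) by (auto simp: sym_def)
  then show ?thesis
    using assms(2) by (meson sym_rtrancl symD)
qed

lemma rtrancl_restrict_mono:
  assumes "M \<subseteq> M'" "(x, y) \<in> (A \<inter> M \<times> M)\<^sup>*"
  shows "(x, y) \<in> (A \<inter> M' \<times> M')\<^sup>*"
proof -
  have "A \<inter> M \<times> M \<subseteq> A \<inter> M' \<times> M'"
    using assms(1) by auto
  then show ?thesis
    using assms(2) rtrancl_mono by blast
qed

lemma comp_within_subset: "comp_within M A x \<subseteq> M"
  by (auto simp: comp_within_def)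

lemma comp_within_self: "x \<in> M \<Longrightarrow> x \<in> comp_within M A x"
  by (auto simp: comp_within_def)

lemma comp_within_eq:
  assumes "sym A" "y \<in> comp_within M A x"
  shows "comp_within M A y = comp_within M A x"
proof -
  have xy: "(x, y) \<in> (A \<inter> M \<times> M)\<^sup>*"
    using assms(2) by (simp add: comp_within_def)
  then have yx: "(y, x) \<in> (A \<inter> M \<times> M)\<^sup>*"
    by (rule rtrancl_restrict_sym[OF assms(1)])
  show ?thesis
    unfolding comp_within_def using rtrancl_trans[OF xy] rtrancl_trans[OF yx] by blast
qed

lemma comp_within_disjoint:
  assumes "sym A" "comp_within M A x \<noteq> comp_within M A y"
  shows "comp_within M A x \<inter> comp_within M A y = {}"
  using comp_within_eq[OF assms(1)] assms(2) by (metis disjoint_iff)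

lemma rtrancl_in_comp_within:
  assumes "(x, y) \<in> (A \<inter> M \<times> M)\<^sup>*"
  shows "(x, y) \<in> (A \<inter> comp_within M A x \<times> comp_within M A x)\<^sup>*"
  using assms
proof (induction rule: rtrancl_induct)
  case (step y z)
  have "(x, z) \<in> (A \<inter> M \<times> M)\<^sup>*"
    using step(1,2) by (rule rtrancl_into_rtrancl)
  with step(1,2) have "(y, z) \<in> A \<inter> comp_within M A x \<times> comp_within M A x"
    by (simp add: comp_within_def)
  with step(3) show ?case
    by (rule rtrancl_into_rtrancl)
qed simp

lemma rtrancl_restrict_last_neighbour:
  assumes "(y, x) \<in> (A \<inter> M \<times> M)\<^sup>*" "y \<noteq> x" "y \<in> M"
  shows "\<exists>z. (y, z) \<in> (A \<inter> (M - {x}) \<times> (M - {x}))\<^sup>* \<and> (z, x) \<in> A \<and> z \<in> M - {x}"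
  using assms
proof (induction rule: converse_rtrancl_induct)
  case (step y y')
  show ?case
  proof (cases "y' = x")
    case False
    then obtain z where "(y', z) \<in> (A \<inter> (M - {x}) \<times> (M - {x}))\<^sup>*" "(z, x) \<in> A" "z \<in> M - {x}"
      using step by blast
    moreover have "(y, y') \<in> A \<inter> (M - {x}) \<times> (M - {x})"
      using step(1,4) False by auto
    ultimately show ?thesis
      by (meson converse_rtrancl_into_rtrancl)
  qed (use step in \<open>auto intro: exI[of _ y]\<close>)
qed simp

lemma card_image_le_if_factors:
  assumes "finite X" "\<And>a b. a \<in> X \<Longrightarrow> b \<in> X \<Longrightarrow> g a = g b \<Longrightarrow> h a = h b"
  shows "card (h ` X) \<le> card (g ` X)"
proof -
  have "h a = h (inv_into X g (g a))" if "a \<in> X" for a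
  proof -
    have "inv_into X g (g a) \<in> X" "g (inv_into X g (g a)) = g a"
      using that by (simp_all add: inv_into_into f_inv_into_f)
    then show ?thesis
      using assms(2) that by metis
  qed
  then have "h ` X \<subseteq> (\<lambda>c. h (inv_into X g c)) ` g ` X"
    by blast
  then have "card (h ` X) \<le> card ((\<lambda>c. h (inv_into X g c)) ` g ` X)"
    using assms(1) by (intro card_mono) simp_all
  also have "\<dots> \<le> card (g ` X)"
    using assms(1) by (intro card_image_le) simp
  finally show ?thesis .
qed

lemma comps_within_subset: "Y \<in> comps_within M A \<Longrightarrow> Y \<subseteq> M"
  by (auto simp: comps_within_def comp_within_def)

lemma comps_within_nonempty: "Y \<in> comps_within M A \<Longrightarrow> Y \<noteq> {}"
  using comp_within_self by (fastforce simp: comps_within_def)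

lemma Union_comps_within: "\<Union> (comps_within M A) = M"
  using comp_within_self comp_within_subset by (fastforce simp: comps_within_def)

lemma pairwise_disjnt_comps_within: "sym A \<Longrightarrow> pairwise disjnt (comps_within M A)"
  using comp_within_disjoint by (fastforce simp: comps_within_def pairwise_def disjnt_def)

lemma rtrancl_comp_within_to_cut:
  assumes conn: "connected_within N A" and symA: "sym A" and x: "x \<in> N"
    and Y: "Y \<in> comps_within (N - {x}) A" and v: "v \<in> Y"
  shows "(v, x) \<in> (A \<inter> insert x Y \<times> insert x Y)\<^sup>*"
proof -
  let ?M = "N - {x}"
  obtain z0 where z0: "z0 \<in> ?M" and Y_eq: "Y = comp_within ?M A z0"
    using Y by (auto simp: comps_within_def)
  have z0x: "(z0, x) \<in> (A \<inter> N \<times> N)\<^sup>*"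
    using conn z0 x by (simp add: connected_within_def)
  have "z0 \<noteq> x" "z0 \<in> N"
    using z0 by auto
  with rtrancl_restrict_last_neighbour[OF z0x] obtain z
    where z: "(z0, z) \<in> (A \<inter> ?M \<times> ?M)\<^sup>*" "(z, x) \<in> A" "z \<in> ?M"
    by blast
  have z0z: "(z0, z) \<in> (A \<inter> Y \<times> Y)\<^sup>*"
    unfolding Y_eq using z(1) by (rule rtrancl_in_comp_within)
  have zY: "z \<in> Y"
    using z(1,3) by (simp add: Y_eq comp_within_def)
  have "(z0, v) \<in> (A \<inter> ?M \<times> ?M)\<^sup>*"
    using v by (simp add: Y_eq comp_within_def)
  then have "(z0, v) \<in> (A \<inter> Y \<times> Y)\<^sup>*"
    unfolding Y_eq by (rule rtrancl_in_comp_within)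
  then have "(v, z0) \<in> (A \<inter> Y \<times> Y)\<^sup>*"
    by (rule rtrancl_restrict_sym[OF symA])
  then have "(v, z) \<in> (A \<inter> Y \<times> Y)\<^sup>*"
    using z0z by (rule rtrancl_trans)
  then have "(v, z) \<in> (A \<inter> insert x Y \<times> insert x Y)\<^sup>*"
    by (rule rtrancl_restrict_mono[rotated]) auto
  moreover have "(z, x) \<in> A \<inter> insert x Y \<times> insert x Y"
    using z(2) zY by simp
  ultimately show ?thesis
    by (rule rtrancl_into_rtrancl)
qed

lemma connected_within_insert_comp:
  assumes "connected_within N A" "sym A" "x \<in> N" "Y \<in> comps_within (N - {x}) A"
  shows "connected_within (insert x Y) A"
  unfolding connected_within_def
proof (intro ballI)
  fix a b assume "a \<in> insert x Y" "b \<in> insert x Y"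
  then have "(a, x) \<in> (A \<inter> insert x Y \<times> insert x Y)\<^sup>*" "(b, x) \<in> (A \<inter> insert x Y \<times> insert x Y)\<^sup>*"
    using rtrancl_comp_within_to_cut[OF assms] by auto
  then show "(a, b) \<in> (A \<inter> insert x Y \<times> insert x Y)\<^sup>*"
    using rtrancl_restrict_sym[OF assms(2)] rtrancl_trans by metis
qed

lemma comps_within_remove_eq_image:
  assumes conn: "connected_within N A" and symA: "sym A" and x: "x \<in> N"
    and Y: "Y \<in> comps_within (N - {x}) A" and y: "y \<in> Y"
  shows "comps_within (N - {y}) A = comp_within (N - {y}) A ` (insert x Y - {y})"
proof -
  let ?N' = "N - {y}"
  have Y_sub: "Y \<subseteq> N - {x}"
    using Y by (rule comps_within_subset)
  have "comp_within ?N' A z \<in> comp_within ?N' A ` (insert x Y - {y})" if z: "z \<in> ?N'" for z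
  proof (cases "z \<in> insert x Y")
    case False
    define Y' where "Y' = comp_within (N - {x}) A z"
    have zM: "z \<in> N - {x}"
      using z False by auto
    then have Y': "Y' \<in> comps_within (N - {x}) A" "z \<in> Y'"
      unfolding Y'_def comps_within_def by (auto intro: comp_within_self)
    with False have "Y' \<noteq> Y"
      by blast
    with Y Y'(1) have "disjnt Y' Y"
      using pairwise_disjnt_comps_within[OF symA] by (simp add: pairwise_def)
    moreover have "Y' \<subseteq> N - {x}"
      using Y'(1) by (rule comps_within_subset)
    ultimately have "insert x Y' \<subseteq> ?N'"
      using y x Y_sub by (auto simp: disjnt_def)
    then have "(z, x) \<in> (A \<inter> ?N' \<times> ?N')\<^sup>*"
      using rtrancl_comp_within_to_cut[OF conn symA x Y'] by (rule rtrancl_restrict_mono)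
    moreover have "x \<in> ?N'"
      using x Y_sub y by auto
    ultimately have "x \<in> comp_within ?N' A z"
      by (simp add: comp_within_def)
    then have "comp_within ?N' A x = comp_within ?N' A z"
      by (rule comp_within_eq[OF symA])
    moreover have "x \<in> insert x Y - {y}"
      using Y_sub y by auto
    ultimately show ?thesis
      by (metis image_eqI)
  qed (use z in blast)
  then have "comp_within ?N' A ` ?N' \<subseteq> comp_within ?N' A ` (insert x Y - {y})"
    by blast
  moreover have "insert x Y - {y} \<subseteq> ?N'"
    using Y_sub x by auto
  ultimately show ?thesis
    unfolding comps_within_def by (auto dest: image_mono[of _ _ "comp_within ?N' A"])
qed

lemma card_comps_within_remove_le:
  assumes "finite N" "connected_within N A" "sym A" "x \<in> N"
    and Y: "Y \<in> comps_within (N - {x}) A" and "y \<in> Y"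
  shows "card (comps_within (N - {y}) A) \<le> card (comps_within (insert x Y - {y}) A)"
proof -
  let ?G' = "insert x Y - {y}"
  have "?G' \<subseteq> N - {y}"
    using comps_within_subset[OF Y] assms(4) by auto
  have "card (comp_within (N - {y}) A ` ?G') \<le> card (comp_within ?G' A ` ?G')"
  proof (rule card_image_le_if_factors)
    show "finite ?G'"
      using \<open>?G' \<subseteq> N - {y}\<close> assms(1) finite_subset by blast
  next
    fix a b assume ab: "a \<in> ?G'" "b \<in> ?G'" "comp_within ?G' A a = comp_within ?G' A b"
    then have "b \<in> comp_within ?G' A a"
      using comp_within_self[of b ?G' A] by simp
    then have "(a, b) \<in> (A \<inter> ?G' \<times> ?G')\<^sup>*"
      by (simp add: comp_within_def)
    then have "(a, b) \<in> (A \<inter> (N - {y}) \<times> (N - {y}))\<^sup>*"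
      by (rule rtrancl_restrict_mono[OF \<open>?G' \<subseteq> N - {y}\<close>])
    then have "b \<in> comp_within (N - {y}) A a"
      using ab(2) \<open>?G' \<subseteq> N - {y}\<close> by (auto simp: comp_within_def)
    then show "comp_within (N - {y}) A a = comp_within (N - {y}) A b"
      using comp_within_eq[OF assms(3)] by metis
  qed
  then show ?thesis
    using comps_within_remove_eq_image[OF assms(2-6)] by (simp add: comps_within_def)
qed

text \<open>The inductive step of the next lemma at a cut vertex x: together with x, each component
  Y of N - x spans a smaller connected graph.\<close>

lemma sum_card_comps_remove_at_comp:
  assumes IH: "\<And>G. G \<subset> N \<Longrightarrow> G \<noteq> {} \<Longrightarrow> connected_within G A \<Longrightarrow>
      (\<Sum>y\<in>G. card (comps_within (G - {y}) A)) \<le> 2 * card G - 2"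
    and fin: "finite N" and conn: "connected_within N A" and symA: "sym A" and x: "x \<in> N"
    and Y: "Y \<in> comps_within (N - {x}) A" and cut: "2 \<le> card (comps_within (N - {x}) A)"
  shows "(\<Sum>y\<in>Y. card (comps_within (N - {y}) A)) + 1 \<le> 2 * card Y"
proof -
  let ?G = "insert x Y"
  have Y_sub: "Y \<subseteq> N - {x}"
    using Y by (rule comps_within_subset)
  then have xY: "x \<notin> Y" and finY: "finite Y"
    using fin finite_subset by auto
  have "comps_within (N - {x}) A \<noteq> {Y}"
    using cut by auto
  then obtain Y' where Y': "Y' \<in> comps_within (N - {x}) A" "Y' \<noteq> Y"
    using Y by blast
  then obtain y' where "y' \<in> Y'"
    using comps_within_nonempty by blast
  moreover have "disjnt Y' Y"
    using pairwise_disjnt_comps_within[OF symA] Y Y' by (simp add: pairwise_def)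
  moreover have "Y' \<subseteq> N - {x}"
    using Y'(1) by (rule comps_within_subset)
  ultimately have "y' \<in> N - ?G"
    by (auto simp: disjnt_def)
  then have "?G \<subset> N"
    using x Y_sub by blast
  then have bound: "(\<Sum>y\<in>?G. card (comps_within (?G - {y}) A)) \<le> 2 * card ?G - 2"
    using IH connected_within_insert_comp[OF conn symA x Y] by blast
  have card_G: "card ?G = Suc (card Y)"
    using xY finY by simp
  have "comps_within (?G - {x}) A \<noteq> {}" "finite (comps_within (?G - {x}) A)"
    using comps_within_nonempty[OF Y] xY finY by (simp_all add: comps_within_def)
  then have "1 \<le> card (comps_within (?G - {x}) A)"
    by (simp add: Suc_le_eq card_gt_0_iff)
  moreover have "(\<Sum>y\<in>Y. card (comps_within (N - {y}) A)) \<le> (\<Sum>y\<in>Y. card (comps_within (?G - {y}) A))"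
    using card_comps_within_remove_le[OF fin conn symA x Y] by (rule sum_mono)
  moreover have "(\<Sum>y\<in>?G. card (comps_within (?G - {y}) A))
      = card (comps_within (?G - {x}) A) + (\<Sum>y\<in>Y. card (comps_within (?G - {y}) A))"
    using xY finY by simp
  ultimately show ?thesis
    using bound card_G by linarith
qed

lemma sum_card_comps_remove_le:
  assumes "finite N" "N \<noteq> {}" "connected_within N A" "sym A"
  shows "(\<Sum>x\<in>N. card (comps_within (N - {x}) A)) \<le> 2 * card N - 2"
  using assms(1-3)
proof (induction N rule: finite_psubset_induct)
  case (psubset N)
  let ?c = "\<lambda>x. card (comps_within (N - {x}) A)"
  show ?case
  proof (cases "\<exists>x\<in>N. 2 \<le> ?c x")
    case False
    then have "(\<Sum>x\<in>N. ?c x) \<le> (\<Sum>x\<in>N. 1)"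
      by (intro sum_mono) (auto simp: not_le)
    moreover have "(\<Sum>x\<in>N. ?c x) = 0" if "card N = 1"
      using that by (elim card_1_singletonE) (simp add: comps_within_def)
    moreover have "card N \<noteq> 0"
      using psubset.hyps psubset.prems(1) by simp
    ultimately show ?thesis
      by fastforce
  next
    case True
    then obtain x where x: "x \<in> N" and cut: "2 \<le> ?c x"
      by blast
    let ?Ys = "comps_within (N - {x}) A"
    have finY: "finite Y" if "Y \<in> ?Ys" for Y
      using comps_within_subset[OF that] psubset.hyps(1) by (meson finite_Diff finite_subset)
    have disj: "pairwise disjnt ?Ys"
      using assms(4) by (rule pairwise_disjnt_comps_within)
    have "(\<Sum>Y\<in>?Ys. (\<Sum>y\<in>Y. ?c y) + 1) \<le> (\<Sum>Y\<in>?Ys. 2 * card Y)"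
      using sum_card_comps_remove_at_comp[OF psubset.IH psubset.hyps(1) psubset.prems(2) assms(4) x _ cut]
      by (intro sum_mono) blast
    then have "(\<Sum>Y\<in>?Ys. \<Sum>y\<in>Y. ?c y) + ?c x \<le> 2 * (\<Sum>Y\<in>?Ys. card Y)"
      by (simp add: sum_Suc sum_distrib_left)
    moreover have "(\<Sum>y\<in>\<Union>?Ys. ?c y) = (\<Sum>Y\<in>?Ys. \<Sum>y\<in>Y. ?c y)"
      using finY disj by (subst sum.Union_disjoint) (auto simp: pairwise_def disjnt_def)
    moreover have "card (\<Union>?Ys) = (\<Sum>Y\<in>?Ys. card Y)"
      using disj finY by (rule card_Union_disjoint)
    moreover have "(\<Sum>y\<in>N. ?c y) = ?c x + (\<Sum>y\<in>N - {x}. ?c y)"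
      using psubset.hyps(1) x by (rule sum.remove)
    moreover have "card (N - {x}) = card N - 1"
      using x by simp
    ultimately show ?thesis
      by (simp add: Union_comps_within)
  qed
qed

section \<open>The upper bound\<close>

context edge_min_eulerian_ext
begin

definition comp_adj :: "('v set \<times> 'v set) set" where
  "comp_adj = {(C, D). \<exists>p\<in>C. \<exists>q\<in>D. (p, q) \<in> adj (R + S)}"

lemma sym_comp_adj: "sym comp_adj"
proof (rule symI)
  fix C D assume "(C, D) \<in> comp_adj"
  then obtain p q where "p \<in> C" "q \<in> D" "(p, q) \<in> adj (R + S)"
    unfolding comp_adj_def by blast
  moreover have "(q, p) \<in> adj (R + S)"
    using sym_adj \<open>(p, q) \<in> adj (R + S)\<close> by (rule symD)
  ultimately show "(D, C) \<in> comp_adj"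
    unfolding comp_adj_def by blast
qed

lemma verts_R_S: "verts (R + S) = verts R"
  using verts_S_subset_verts_R by auto

lemma connected_within_components: "connected_within (components R) comp_adj"
proof -
  have lift: "(comp_of R a, comp_of R b) \<in> (comp_adj \<inter> components R \<times> components R)\<^sup>*"
    if "(a, b) \<in> (adj (R + S))\<^sup>*" "a \<in> verts R" for a b
    using that(1)
  proof (induction rule: rtrancl_induct)
    case (step b b')
    have "b \<in> verts (R + S)"
      using rtrancl_adj_verts[OF step(1)] that(2) by simp
    moreover have "b' \<in> verts (R + S)"
      using Upair_mem_verts[OF step(2)[unfolded mem_adj_iff]] by blast
    ultimately have "b \<in> verts R" "b' \<in> verts R"
      by (simp_all only: verts_R_S)
    moreover have "(comp_of R b, comp_of R b') \<in> comp_adj"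
      using step(2) comp_of_self[of b R] comp_of_self[of b' R] unfolding comp_adj_def by blast
    ultimately have "(comp_of R b, comp_of R b') \<in> comp_adj \<inter> components R \<times> components R"
      by (simp add: comp_of_in_components)
    with step(3) show ?case
      by (rule rtrancl_into_rtrancl)
  qed simp
  show ?thesis
    unfolding connected_within_def
  proof (intro ballI)
    fix C D assume "C \<in> components R" "D \<in> components R"
    then obtain a b where ab: "a \<in> verts R" "C = comp_of R a" "b \<in> verts R" "D = comp_of R b"
      by (auto simp: components_eq)
    then have "(a, b) \<in> (adj (R + S))\<^sup>*"
      using eulerian_R_S by (auto simp: eulerian_def connected_ms_def)
    then show "(C, D) \<in> (comp_adj \<inter> components R \<times> components R)\<^sup>*"
      using lift ab by blast
  qed
qed

lemma rtrancl_adj_avoiding_of_comp_path: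
  assumes path: "(D, D') \<in> (comp_adj \<inter> (components R - {C}) \<times> (components R - {C}))\<^sup>*"
    and D: "D \<in> components R - {C}" and C: "C \<in> components R" "v \<in> C"
    and p: "p \<in> D" and q: "q \<in> D'"
  shows "(p, q) \<in> (adj_avoiding (R + S) v)\<^sup>*"
  using path q
proof (induction arbitrary: q rule: rtrancl_induct)
  case base
  with D C p have "(p, q) \<in> (adj_avoiding R v)\<^sup>*"
    by (intro rtrancl_adj_avoiding_in_other_comp[of D R C]) auto
  then show ?case
    by (rule rtrancl_adj_avoiding_mono[OF mset_subset_eq_add_left])
next
  case (step D1 D2)
  obtain p1 q1 where pq1: "p1 \<in> D1" "q1 \<in> D2" "Upair p1 q1 \<in># R + S"
    using step(2) by (auto simp: comp_adj_def)
  have D12: "D1 \<in> components R" "D1 \<noteq> C" "D2 \<in> components R" "D2 \<noteq> C"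
    using step(2) by auto
  have "p1 \<noteq> v" "q1 \<noteq> v"
    using components_disjoint[OF D12(1) C(1) D12(2)] components_disjoint[OF D12(3) C(1) D12(4)]
      pq1 C(2) by blast+
  with pq1(3) have "(p1, q1) \<in> adj_avoiding (R + S) v"
    by (simp add: adj_avoiding_def)
  moreover have "(p, p1) \<in> (adj_avoiding (R + S) v)\<^sup>*"
    using step.IH pq1(1) by blast
  moreover have "(q1, q) \<in> (adj_avoiding (R + S) v)\<^sup>*"
    using rtrancl_adj_avoiding_mono[OF mset_subset_eq_add_left
        rtrancl_adj_avoiding_in_other_comp[OF D12(3) C(1) D12(4) C(2) pq1(2) step.prems]] .
  ultimately show ?case
    by (meson rtrancl_into_rtrancl rtrancl_trans)
qed

definition partner :: "'v \<Rightarrow> 'v" where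
  "partner v = (SOME u. Upair v u \<in># S)"

lemma Upair_partner: "v \<in> verts S \<Longrightarrow> Upair v (partner v) \<in># S"
  unfolding partner_def by (rule someI_ex) (simp add: in_verts_iff)

lemma comp_partner:
  assumes "v \<in> bal_touched R S"
  shows "comp_of R (partner v) \<in> components R - {comp_of R v}"
proof -
  have v: "v \<in> verts S" "even (deg R v)"
    using assms by (auto simp: bal_touched_def balanced_def)
  have vp: "Upair v (partner v) \<in># S"
    using v(1) by (rule Upair_partner)
  then have "partner v \<in> verts R"
    using Upair_mem_verts[OF vp] verts_S_subset_verts_R by (meson subsetD)
  moreover have "partner v \<notin> comp_of R v"
    using reach_avoiding_disjoint_comp_of[OF v(2) vp] start_in_reach_avoiding[of "partner v" "R + S" v]
    by blast
  then have "comp_of R (partner v) \<noteq> comp_of R v"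
    using comp_of_self[of "partner v" R] by metis
  ultimately show ?thesis
    by (simp add: comp_of_in_components)
qed

definition signature :: "'v \<Rightarrow> 'v set \<times> 'v set set" where
  "signature v = (comp_of R v,
     comp_within (components R - {comp_of R v}) comp_adj (comp_of R (partner v)))"

lemma signature_mem:
  assumes "v \<in> bal_touched R S"
  shows "signature v \<in> (SIGMA C:components R. comps_within (components R - {C}) comp_adj)"
proof -
  have "v \<in> verts R"
    using assms by (simp add: bal_touched_def)
  then show ?thesis
    using comp_partner[OF assms] by (auto simp: signature_def comps_within_def comp_of_in_components)
qed

lemma reach_avoiding_partner:
  assumes v: "v \<in> bal_touched R S" and v': "v' \<in> bal_touched R S" "v' \<noteq> v"
    and same_comp: "comp_of R v' = comp_of R v"
    and path: "(comp_of R (partner v), comp_of R (partner v'))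
      \<in> (comp_adj \<inter> (components R - {comp_of R v}) \<times> (components R - {comp_of R v}))\<^sup>*"
  shows "v' \<in> reach_avoiding (R + S) v (partner v)"
proof -
  have "v \<in> verts R"
    using v by (simp add: bal_touched_def)
  then have C: "comp_of R v \<in> components R" "v \<in> comp_of R v"
    by (simp_all add: comp_of_in_components comp_of_self)
  have D: "comp_of R (partner v) \<in> components R - {comp_of R v}"
    and D': "comp_of R (partner v') \<in> components R - {comp_of R v}"
    using comp_partner[OF v] comp_partner[OF v'(1)] same_comp by simp_all
  have "(partner v, partner v') \<in> (adj_avoiding (R + S) v)\<^sup>*"
    using path D C comp_of_self[of "partner v" R] comp_of_self[of "partner v'" R]
    by (rule rtrancl_adj_avoiding_of_comp_path)
  moreover have "partner v' \<noteq> v"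
    using D' by auto
  then have "(partner v', v') \<in> adj_avoiding (R + S) v"
    using v' Upair_partner[of v'] by (simp add: adj_avoiding_def bal_touched_def Upair_commute)
  ultimately show ?thesis
    unfolding reach_avoiding_def mem_Collect_eq by (rule rtrancl_into_rtrancl)
qed

lemma inj_on_signature: "inj_on signature (bal_touched R S)"
proof (rule inj_onI, rule ccontr)
  fix v v' assume v: "v \<in> bal_touched R S" and v': "v' \<in> bal_touched R S"
    and eq: "signature v = signature v'" and "v \<noteq> v'"
  define N where "N = components R - {comp_of R v}"
  have same_comp: "comp_of R v' = comp_of R v"
    using eq by (simp add: signature_def)
  have "snd (signature v) = snd (signature v')"
    using eq by simp
  then have "comp_within N comp_adj (comp_of R (partner v)) = comp_within N comp_adj (comp_of R (partner v'))"
    unfolding signature_def snd_conv same_comp N_def .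
  moreover have "comp_of R (partner v') \<in> N"
    using comp_partner[OF v'] same_comp by (simp add: N_def)
  ultimately have "comp_of R (partner v') \<in> comp_within N comp_adj (comp_of R (partner v))"
    using comp_within_self by metis
  then have "v' \<in> reach_avoiding (R + S) v (partner v)"
    using reach_avoiding_partner[OF v v' _ same_comp] \<open>v \<noteq> v'\<close>
    by (simp add: comp_within_def N_def)
  moreover have "v' \<in> comp_of R v"
    using same_comp comp_of_self[of v' R] by simp
  moreover have "reach_avoiding (R + S) v (partner v) \<inter> comp_of R v = {}"
    using v Upair_partner[of v] reach_avoiding_disjoint_comp_of[of v "partner v"]
    by (simp add: bal_touched_def balanced_def)
  ultimately show False
    by blast
qed

theorem card_bal_touched_le: "card (bal_touched R S) \<le> 2 * card (components R) - 2"
proof -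
  let ?N = "components R"
  have finN: "finite ?N"
    by (simp add: components_eq)
  obtain a b where "Upair a b \<in># R"
    using rpp by (metis is_rpp_def multiset_nonemptyE uprod_exhaust)
  then have "?N \<noteq> {}"
    using Upair_mem_verts[of a b R] by (auto simp: components_eq)
  have "card (bal_touched R S) = card (signature ` bal_touched R S)"
    using inj_on_signature by (simp add: card_image)
  also have "\<dots> \<le> card (SIGMA C:?N. comps_within (?N - {C}) comp_adj)"
  proof (rule card_mono)
    show "finite (SIGMA C:?N. comps_within (?N - {C}) comp_adj)"
      using finN by (simp add: comps_within_def)
    show "signature ` bal_touched R S \<subseteq> (SIGMA C:?N. comps_within (?N - {C}) comp_adj)"
      using signature_mem by blast
  qed
  also have "\<dots> = (\<Sum>C\<in>?N. card (comps_within (?N - {C}) comp_adj))"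
    using finN by (intro card_SigmaI) (auto simp: comps_within_def)
  also have "\<dots> \<le> 2 * card ?N - 2"
    using finN \<open>?N \<noteq> {}\<close> connected_within_components sym_comp_adj by (rule sum_card_comps_remove_le)
  finally show ?thesis .
qed

end

section \<open>A family of instances attaining the bound\<close>

definition doubled :: "(nat \<Rightarrow> 'v uprod) \<Rightarrow> nat \<Rightarrow> 'v uprod multiset" where
  "doubled g n = (\<Sum>i<n. {#g i, g i#})"

lemma doubled_0 [simp]: "doubled g 0 = {#}"
  by (simp add: doubled_def)

lemma doubled_Suc [simp]: "doubled g (Suc n) = add_mset (g n) (add_mset (g n) (doubled g n))"
  by (simp add: doubled_def)

lemma mem_doubled: "e \<in># doubled g n \<longleftrightarrow> (\<exists>i<n. e = g i)"
  by (induction n) (auto simp: less_Suc_eq)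

lemma even_deg_doubled: "even (deg (doubled g n) y)"
  by (induction n) auto

lemma size_doubled: "size (doubled g n) = 2 * n"
  by (induction n) auto

lemma wt_doubled: "wt \<omega> (doubled g n) = 2 * (\<Sum>i<n. \<omega> (g i))"
  by (induction n) (auto simp: wt_def)

lemma verts_doubled: "verts (doubled g n) = (\<Union>i<n. set_uprod (g i))"
  by (induction n) (auto simp: lessThan_Suc)

text \<open>The components of \<open>tight_R c\<close> are the doubled edges {3i, 3i+1}, and
  \<open>tight_S c\<close> chains them by the doubled edges {3i+1, 3i+3}, all of whose ends are
  balanced. No vertex is congruent to 2 mod 3, so an edge crossing t of the cuts {..3j+1}
  weighs at least 3t-1; this makes every Eulerian extension that is not heavier than
  \<open>tight_S c\<close> have at least as many edges.\<close>

definition tight_V :: "nat \<Rightarrow> nat set" where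
  "tight_V c = {x. x < 3 * c \<and> x mod 3 \<noteq> 2}"

definition tight_E :: "nat \<Rightarrow> nat uprod set" where
  "tight_E c = {Upair a b | a b. a \<in> tight_V c \<and> b \<in> tight_V c \<and> a \<noteq> b}"

definition dist_wt :: "nat uprod \<Rightarrow> nat" where
  "dist_wt e = Max (set_uprod e) - Min (set_uprod e)"

definition tight_R :: "nat \<Rightarrow> nat uprod multiset" where
  "tight_R c = doubled (\<lambda>i. Upair (3 * i) (3 * i + 1)) c"

definition tight_S :: "nat \<Rightarrow> nat uprod multiset" where
  "tight_S c = doubled (\<lambda>i. Upair (3 * i + 1) (3 * i + 3)) (c - 1)"

lemma dist_wt_Upair: "dist_wt (Upair a b) = (if a \<le> b then b - a else a - b)"
  by (simp add: dist_wt_def max_def min_def)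

lemma mem_tight_R: "e \<in># tight_R c \<longleftrightarrow> (\<exists>i<c. e = Upair (3 * i) (3 * i + 1))"
  by (simp add: tight_R_def mem_doubled)

lemma mem_tight_S: "e \<in># tight_S c \<longleftrightarrow> (\<exists>i<c - 1. e = Upair (3 * i + 1) (3 * i + 3))"
  by (simp add: tight_S_def mem_doubled)

lemma is_rpp_tight: "c \<ge> 1 \<Longrightarrow> is_rpp (tight_V c) (tight_E c) (tight_R c)"
  unfolding is_rpp_def
proof (intro conjI)
  assume "c \<ge> 1"
  then have "Upair 0 1 \<in># tight_R c"
    unfolding mem_tight_R by (intro exI[of _ 0]) simp
  then show "tight_R c \<noteq> {#}"
    by auto
  show "set_mset (tight_R c) \<subseteq> tight_E c"
    by (force simp: mem_tight_R tight_E_def tight_V_def)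
qed (auto simp: tight_V_def tight_E_def)

lemma is_metric_tight: "is_metric (tight_V c) (tight_E c) dist_wt"
  unfolding is_metric_def
proof (intro conjI ballI impI)
  fix u v assume "u \<in> tight_V c" "v \<in> tight_V c" "u \<noteq> v"
  then show "Upair u v \<in> tight_E c"
    by (auto simp: tight_E_def)
next
  fix u v w :: nat
  show "dist_wt (Upair u w) \<le> dist_wt (Upair u v) + dist_wt (Upair v w)"
    by (simp add: dist_wt_Upair; arith)
qed

lemma verts_tight_R: "verts (tight_R c) = tight_V c"
proof -
  have "x \<in> (\<Union>i<c. {3 * i, 3 * i + 1})" if "x \<in> tight_V c" for x
  proof -
    have "x div 3 < c" "x = 3 * (x div 3) \<or> x = 3 * (x div 3) + 1"
      using that by (auto simp: tight_V_def) presburger+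
    then show ?thesis
      by blast
  qed
  then show ?thesis
    by (auto simp: tight_R_def verts_doubled tight_V_def)
qed

lemma verts_tight_S: "verts (tight_S c) = (\<lambda>i. 3 * i + 1) ` {..<c - 1} \<union> (\<lambda>i. 3 * i + 3) ` {..<c - 1}"
  by (auto simp: tight_S_def verts_doubled)

lemma verts_tight_S_subset: "verts (tight_S c) \<subseteq> verts (tight_R c)"
  unfolding verts_tight_S verts_tight_R tight_V_def by auto

lemma comp_of_tight_R:
  assumes "a \<in> verts (tight_R c)"
  shows "comp_of (tight_R c) a = {3 * (a div 3), 3 * (a div 3) + 1}"
proof -
  define q where "q = a div 3"
  have aq: "a = 3 * q \<or> a = 3 * q + 1" "q < c"
    using assms unfolding q_def verts_tight_R tight_V_def by auto presburger+
  have "b \<in> {3 * q, 3 * q + 1}" if "(a, b) \<in> (adj (tight_R c))\<^sup>*" for b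
    using that
  proof (induction rule: rtrancl_induct)
    case (step y z)
    then obtain i where "(y = 3 * i \<and> z = 3 * i + 1) \<or> (y = 3 * i + 1 \<and> z = 3 * i)"
      by (auto simp: mem_tight_R)
    then show ?case
      using step(3) by auto presburger+
  qed (use aq in auto)
  moreover have "Upair (3 * q) (3 * q + 1) \<in># tight_R c"
    using aq(2) by (auto simp: mem_tight_R)
  then have "(a, 3 * q) \<in> (adj (tight_R c))\<^sup>*" "(a, 3 * q + 1) \<in> (adj (tight_R c))\<^sup>*"
    using aq(1) by (auto simp: Upair_commute)
  ultimately show ?thesis
    unfolding comp_of_def q_def[symmetric] by auto
qed

lemma card_components_tight_R: "card (components (tight_R c)) = c"
proof -
  have "components (tight_R c) = (\<lambda>q. {3 * q, 3 * q + 1}) ` {..<c}"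
  proof
    show "components (tight_R c) \<subseteq> (\<lambda>q. {3 * q, 3 * q + 1}) ` {..<c}"
    proof
      fix C assume "C \<in> components (tight_R c)"
      then obtain a where a: "a \<in> verts (tight_R c)" "C = comp_of (tight_R c) a"
        by (auto simp: components_eq)
      then have "a div 3 < c"
        by (auto simp: verts_tight_R tight_V_def)
      then show "C \<in> (\<lambda>q. {3 * q, 3 * q + 1}) ` {..<c}"
        using comp_of_tight_R[OF a(1)] a(2) by auto
    qed
    show "(\<lambda>q. {3 * q, 3 * q + 1}) ` {..<c} \<subseteq> components (tight_R c)"
    proof
      fix C assume "C \<in> (\<lambda>q. {3 * q, 3 * q + 1}) ` {..<c}"
      then obtain q where q: "q < c" "C = {3 * q, 3 * q + 1}"
        by blast
      then have q_verts: "3 * q \<in> verts (tight_R c)"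
        by (auto simp: verts_tight_R tight_V_def)
      then have "comp_of (tight_R c) (3 * q) = C"
        using comp_of_tight_R[OF q_verts] q(2) by simp
      then show "C \<in> components (tight_R c)"
        using q_verts by (auto simp: components_eq)
    qed
  qed
  moreover have "inj_on (\<lambda>q::nat. {3 * q, 3 * q + 1}) {..<c}"
  proof (rule inj_onI)
    fix x y :: nat assume "{3 * x, 3 * x + 1} = {3 * y, 3 * y + 1}"
    then have "3 * x \<in> {3 * y, 3 * y + 1}"
      by blast
    then show "x = y"
      by auto
  qed
  ultimately show ?thesis
    by (simp add: card_image)
qed

lemma connected_tight: "connected_ms (tight_R c + tight_S c)"
proof (rule connected_msI[where r = 0])
  let ?H = "tight_R c + tight_S c"
  have R_edge: "(3 * q, 3 * q + 1) \<in> adj ?H" if "q < c" for q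
    using that by (auto simp: mem_tight_R)
  have to_0: "(3 * q, 0) \<in> (adj ?H)\<^sup>*" if "q < c" for q
    using that
  proof (induction q)
    case (Suc q)
    have "Upair (3 * q + 1) (3 * Suc q) \<in># tight_S c"
      unfolding mem_tight_S using Suc.prems by (intro exI[of _ q]) auto
    then have "(3 * Suc q, 3 * q + 1) \<in> adj ?H"
      by (simp add: Upair_commute)
    moreover have "(3 * q + 1, 3 * q) \<in> adj ?H"
      using R_edge[of q] Suc.prems by (simp add: Upair_commute)
    ultimately show ?case
      using Suc by (meson Suc_lessD converse_rtrancl_into_rtrancl)
  qed simp
  fix y assume "y \<in> verts ?H"
  then have "y \<in> tight_V c"
    using verts_tight_S_subset verts_tight_R by auto
  then have y: "y div 3 < c" "y = 3 * (y div 3) \<or> y = 3 * (y div 3) + 1"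
    by (auto simp: tight_V_def) presburger+
  have "(3 * (y div 3) + 1, 3 * (y div 3)) \<in> adj ?H"
    using R_edge[OF y(1)] by (simp add: Upair_commute)
  then show "(y, 0) \<in> (adj ?H)\<^sup>*"
    using y to_0[OF y(1)] by (metis converse_rtrancl_into_rtrancl)
qed

lemma eulerian_ext_tight: "eulerian_ext (tight_E c) (tight_R c) (tight_S c)"
proof -
  have "set_mset (tight_S c) \<subseteq> tight_E c"
    by (force simp: mem_tight_S tight_E_def tight_V_def)
  moreover have "even (deg (tight_R c + tight_S c) v)" for v
    by (simp add: tight_R_def tight_S_def even_deg_doubled)
  ultimately show ?thesis
    using connected_tight by (simp add: eulerian_ext_def eulerian_def balanced_def)
qed

lemma card_bal_touched_tight: "card (bal_touched (tight_R c) (tight_S c)) = 2 * c - 2"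
proof -
  have "bal_touched (tight_R c) (tight_S c) = verts (tight_S c)"
    using verts_tight_S_subset
    by (auto simp: bal_touched_def balanced_def tight_R_def even_deg_doubled)
  moreover have "card (verts (tight_S c)) = 2 * (c - 1)"
  proof -
    have "(\<lambda>i. 3 * i + 1) ` {..<c - 1} \<inter> (\<lambda>i::nat. 3 * i + 3) ` {..<c - 1} = {}"
      by auto presburger
    moreover have "inj_on (\<lambda>i::nat. 3 * i + 1) {..<c - 1}" "inj_on (\<lambda>i::nat. 3 * i + 3) {..<c - 1}"
      by (auto simp: inj_on_def)
    ultimately show ?thesis
      unfolding verts_tight_S by (simp add: card_Un_disjoint card_image)
  qed
  ultimately show ?thesis
    by simp
qed

lemma card_crossing_cuts_le:
  assumes "e \<in> tight_E c"
  shows "3 * card {j\<in>{..<n}. crossing {..3 * j + 1} e} \<le> dist_wt e + 1"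
proof -
  obtain a b where e: "e = Upair a b" and ab: "a \<in> tight_V c" "b \<in> tight_V c" "a \<le> b"
    using assms by (auto simp: tight_E_def) (metis Upair_commute nle_le)
  have a3: "a = 3 * (a div 3) + a mod 3" "a mod 3 \<le> 1"
    and b3: "b = 3 * (b div 3) + b mod 3" "b mod 3 \<le> 1"
    using ab(1,2) by (auto simp: tight_V_def)
  have "{j\<in>{..<n}. crossing {..3 * j + 1} e} \<subseteq> {a div 3..<b div 3}"
  proof
    fix j assume "j \<in> {j\<in>{..<n}. crossing {..3 * j + 1} e}"
    then have "a \<le> 3 * j + 1" "3 * j + 1 < b"
      using ab(3) by (auto simp: e crossing_def)
    moreover from this(1) have "a div 3 \<le> (3 * j + 1) div 3"
      by (rule div_le_mono)
    moreover have "(3 * j + 1) div 3 = j"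
      by presburger
    moreover have "j < b div 3"
      using \<open>3 * j + 1 < b\<close> b3 by linarith
    ultimately show "j \<in> {a div 3..<b div 3}"
      by simp
  qed
  then have "card {j\<in>{..<n}. crossing {..3 * j + 1} e} \<le> b div 3 - a div 3"
    using card_mono[of "{a div 3..<b div 3}"] by fastforce
  moreover have "a div 3 \<le> b div 3"
    using ab(3) by (rule div_le_mono)
  then have "3 * (b div 3 - a div 3) \<le> b - a + 1"
    using a3 b3 by linarith
  ultimately show ?thesis
    using ab(3) by (simp add: e dist_wt_Upair)
qed

lemma two_le_size_crossing_cut:
  assumes ext: "eulerian_ext (tight_E c) (tight_R c) S'" and j: "j < c - 1"
  shows "2 \<le> size (filter_mset (crossing {..3 * j + 1}) S')"
proof -
  let ?K = "{..3 * j + 1}"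
  have eul: "eulerian (tight_R c + S')"
    using ext by (simp add: eulerian_ext_def)
  have no_R: "\<not> crossing ?K e" if "e \<in># tight_R c" for e
    using that by (auto simp: mem_tight_R crossing_def)
  then have filter_eq: "filter_mset (crossing ?K) (tight_R c + S') = filter_mset (crossing ?K) S'"
    by (simp add: filter_mset_eq_mempty_iff)
  have "even (size (filter_mset (crossing ?K) (tight_R c + S')))"
    using eulerian_even_deg[OF eul] by (intro even_size_crossing) simp_all
  then have even: "even (size (filter_mset (crossing ?K) S'))"
    unfolding filter_eq .
  have "0 \<in> verts (tight_R c)" "3 * (j + 1) \<in> verts (tight_R c)"
    using j by (auto simp: verts_tight_R tight_V_def)
  then have "(0, 3 * (j + 1)) \<in> (adj (tight_R c + S'))\<^sup>*"
    using eul by (simp add: eulerian_def connected_ms_def)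
  then have "\<exists>e\<in>#tight_R c + S'. crossing ?K e"
    by (rule rtrancl_adj_crossing) auto
  then obtain e where "e \<in># tight_R c + S'" "crossing ?K e"
    by blast
  then have "filter_mset (crossing ?K) S' \<noteq> {#}"
    using no_R by (auto simp: filter_mset_eq_mempty_iff)
  with even show ?thesis
    by (metis One_nat_def Suc_1 Suc_leI le_neq_implies_less nonempty_has_size odd_one)
qed

lemma tight_S_edge_min:
  assumes c: "c \<ge> 1"
  shows "edge_min_ext (tight_E c) dist_wt (tight_R c) (tight_S c)"
proof -
  have "size (tight_S c) \<le> size S'" if ext: "eulerian_ext (tight_E c) (tight_R c) S'"
    and wt: "wt dist_wt S' \<le> wt dist_wt (tight_S c)" for S'
  proof -
    let ?cross = "\<lambda>e. card {j\<in>{..<c - 1}. crossing {..3 * j + 1} e}"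
    have "(\<Sum>j<c - 1. 2) \<le> (\<Sum>j<c - 1. size (filter_mset (crossing {..3 * j + 1}) S'))"
      by (rule sum_mono, rule two_le_size_crossing_cut[OF ext]) simp
    then have "2 * (c - 1) \<le> (\<Sum>j<c - 1. size (filter_mset (crossing {..3 * j + 1}) S'))"
      by simp
    also have "\<dots> = (\<Sum>e\<in>#S'. ?cross e)"
      by (rule sum_size_filter_mset) simp
    finally have lower: "6 * (c - 1) \<le> 3 * (\<Sum>e\<in>#S'. ?cross e)"
      by simp
    have "3 * (\<Sum>e\<in>#S'. ?cross e) = (\<Sum>e\<in>#S'. 3 * ?cross e)"
      by (rule sum_mset_distrib_left)
    also have "\<dots> \<le> (\<Sum>e\<in>#S'. dist_wt e + 1)"
      using ext card_crossing_cuts_le by (intro sum_mset_mono) (auto simp: eulerian_ext_def)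
    also have "\<dots> = wt dist_wt S' + size S'"
      by (induction S') (auto simp: wt_def)
    finally have "3 * (\<Sum>e\<in>#S'. ?cross e) \<le> wt dist_wt S' + size S'" .
    moreover have "wt dist_wt (tight_S c) = 4 * (c - 1)" "size (tight_S c) = 2 * (c - 1)"
      by (simp_all add: tight_S_def wt_doubled size_doubled dist_wt_Upair)
    ultimately show ?thesis
      using lower wt by linarith
  qed
  then show ?thesis
    using eulerian_ext_tight by (force simp: edge_min_ext_def)
qed

lemma tight_instance:
  assumes "c \<ge> 1"
  shows "is_rpp (tight_V c) (tight_E c) (tight_R c) \<and> is_metric (tight_V c) (tight_E c) dist_wt \<and>
    card (components (tight_R c)) = c \<and> edge_min_ext (tight_E c) dist_wt (tight_R c) (tight_S c) \<and>
    card (bal_touched (tight_R c) (tight_S c)) = 2 * c - 2"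
  using is_rpp_tight[OF assms] is_metric_tight card_components_tight_R tight_S_edge_min[OF assms]
    card_bal_touched_tight by blast

theorem mainTheorem6:
  shows "(\<forall>(V :: 'v set) E \<omega> R S.
            is_rpp V E R \<and> is_metric V E \<omega> \<and> edge_min_ext E \<omega> R S \<longrightarrow>
            card (bal_touched R S) \<le> 2 * card (components R) - 2)
       \<and> (\<forall>c::nat. c \<ge> 1 \<longrightarrow>
            (\<exists>(V :: nat set) E \<omega> R S.
               is_rpp V E R \<and> is_metric V E \<omega> \<and> card (components R) = c \<and>
               edge_min_ext E \<omega> R S \<and> card (bal_touched R S) = 2 * c - 2))"
proof (intro conjI allI impI)
  fix V :: "'v set" and E \<omega> R S
  assume "is_rpp V E R \<and> is_metric V E \<omega> \<and> edge_min_ext E \<omega> R S"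
  then interpret edge_min_eulerian_ext V E \<omega> R S
    by unfold_locales auto
  show "card (bal_touched R S) \<le> 2 * card (components R) - 2"
    by (rule card_bal_touched_le)
next
  fix c :: nat
  assume c: "c \<ge> 1"
  show "\<exists>(V :: nat set) E \<omega> R S.
      is_rpp V E R \<and> is_metric V E \<omega> \<and> card (components R) = c \<and>
      edge_min_ext E \<omega> R S \<and> card (bal_touched R S) = 2 * c - 2"
    using tight_instance[OF c] by blast
qed

end
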